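(* Let $X_o$ be a compact Hausdorff space, $\theta$ a homeomorphism of $X_o$ such that $(X_o,\theta)$ is topologically ergodic, $f\in C(X_o;\mathbb{T})$, and $\Phi_{\theta,f}(x,w):=(\theta(x),f(x)w)$ acting on $C(X_o\times\mathbb{T})$ by $h\mapsto h\circ\Phi_{\theta,f}$. Then the fixed-point subalgebra $C(X_o\times\mathbb{T})^{\Phi_{\theta,f}}$ is $*$-isomorphic either to $\mathbb{C}$ or to $C(\mathbb{T})$, the first case occurring exactly when $(C(X_o\times\mathbb{T}),\Phi_{\theta,f})$ is topologically ergodic.
   Context: $(X_o,\theta)$ topologically ergodic means the only $h\in C(X_o)$ with $h\circ\theta=h$ are constants; similarly $(C(X_o\times\mathbb{T}),\Phi_{\theta,f})$ is topologically ergodic if its fixed-point subalgebra $\{h\mid h\circ\Phi_{\theta,f}=h\}$ consists of constants. *)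

theory Defs
  imports "HOL-Analysis.Analysis"
begin

definition circle :: "complex set" where
  "circle = sphere 0 1"

text \<open>C(D): continuous complex functions on D, made extensional (value 0 outside D)
  so that each element of C(D) has a unique representative.\<close>
definition Cfun :: "'a::topological_space set \<Rightarrow> ('a \<Rightarrow> complex) set" where
  "Cfun D = {h. continuous_on D h \<and> (\<forall>p. p \<notin> D \<longrightarrow> h p = 0)}"

definition top_ergodic :: "('a::topological_space \<Rightarrow> 'a) \<Rightarrow> bool" where
  "top_ergodic \<theta> \<longleftrightarrow>
     (\<forall>h::'a \<Rightarrow> complex. continuous_on UNIV h \<and> h \<circ> \<theta> = h \<longrightarrow> (\<exists>c. h = (\<lambda>_. c)))"

definition skew :: "('a \<Rightarrow> 'a) \<Rightarrow> ('a \<Rightarrow> complex) \<Rightarrow> 'a \<times> complex \<Rightarrow> 'a \<times> complex" where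
  "skew \<theta> f = (\<lambda>(x, w). (\<theta> x, f x * w))"

definition fixed_alg :: "('a::topological_space \<Rightarrow> 'a) \<Rightarrow> ('a \<Rightarrow> complex) \<Rightarrow> ('a \<times> complex \<Rightarrow> complex) set" where
  "fixed_alg \<theta> f = {h \<in> Cfun (UNIV \<times> circle). \<forall>p \<in> UNIV \<times> circle. h (skew \<theta> f p) = h p}"

definition skew_ergodic :: "('a::topological_space \<Rightarrow> 'a) \<Rightarrow> ('a \<Rightarrow> complex) \<Rightarrow> bool" where
  "skew_ergodic \<theta> f \<longleftrightarrow>
     (\<forall>h \<in> fixed_alg \<theta> f. \<exists>c. \<forall>p \<in> UNIV \<times> circle. h p = c)"

definition star_iso :: "('a \<Rightarrow> complex) set \<Rightarrow> ('b \<Rightarrow> complex) set \<Rightarrow> (('a \<Rightarrow> complex) \<Rightarrow> ('b \<Rightarrow> complex)) \<Rightarrow> bool" where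
  "star_iso A B \<phi> \<longleftrightarrow> bij_betw \<phi> A B \<and>
     (\<forall>g\<in>A. \<forall>h\<in>A. \<phi> (\<lambda>p. g p + h p) = (\<lambda>q. \<phi> g q + \<phi> h q)) \<and>
     (\<forall>g\<in>A. \<forall>h\<in>A. \<phi> (\<lambda>p. g p * h p) = (\<lambda>q. \<phi> g q * \<phi> h q)) \<and>
     (\<forall>c. \<forall>h\<in>A. \<phi> (\<lambda>p. c * h p) = (\<lambda>q. c * \<phi> h q)) \<and>
     (\<forall>h\<in>A. \<phi> (\<lambda>p. cnj (h p)) = (\<lambda>q. cnj (\<phi> h q)))"

definition star_isomorphic :: "('a \<Rightarrow> complex) set \<Rightarrow> ('b \<Rightarrow> complex) set \<Rightarrow> bool" where
  "star_isomorphic A B \<longleftrightarrow> (\<exists>\<phi>. star_iso A B \<phi>)"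

definition star_isomorphic_to_C :: "('a \<Rightarrow> complex) set \<Rightarrow> bool" where
  "star_isomorphic_to_C A \<longleftrightarrow> (\<exists>\<phi>. bij_betw \<phi> A (UNIV :: complex set) \<and>
     (\<forall>g\<in>A. \<forall>h\<in>A. \<phi> (\<lambda>p. g p + h p) = \<phi> g + \<phi> h) \<and>
     (\<forall>g\<in>A. \<forall>h\<in>A. \<phi> (\<lambda>p. g p * h p) = \<phi> g * \<phi> h) \<and>
     (\<forall>c. \<forall>h\<in>A. \<phi> (\<lambda>p. c * h p) = c * \<phi> h) \<and>
     (\<forall>h\<in>A. \<phi> (\<lambda>p. cnj (h p)) = cnj (\<phi> h)))"

end

theory Submission
  imports Defs "HOL-Library.Real_Mod"
begin

text \<open>A continuous function \<open>h\<close> fixed by \<open>\<Phi>\<close> has a continuous, \<open>\<theta>\<close>-invariant fiberwise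
  sup norm \<open>x \<mapsto> sup\<^sub>w |h(x,w)|\<close>, which is constant by ergodicity; so a fixed function is
  determined by its restriction to a single fiber. Rotating the circle coordinate preserves
  the fixed algebra, and the rotations fixing all of it form a closed subgroup of the circle:
  either the whole circle or the group of m-th roots of unity. In the first case fixed
  functions are constant on fibers, hence constant by ergodicity. In the second case restriction
  to a fiber descends along \<open>w \<mapsto> w ^ m\<close> to an injective *-homomorphism into C(T) whose
  image is uniformly closed, contains the constants and separates points, hence is all of C(T)
  by Stone-Weierstrass.\<close>

lemma circle_iff_norm: "w \<in> circle \<longleftrightarrow> norm w = 1"
  by (simp add: circle_def)

lemma one_in_circle [simp]: "1 \<in> circle"
  by (simp add: circle_iff_norm)

lemma cis_in_circle [simp]: "cis t \<in> circle"
  by (simp add: circle_iff_norm)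

lemma compact_circle: "compact circle"
  by (simp add: circle_def)

lemma circle_mult: "a \<in> circle \<Longrightarrow> b \<in> circle \<Longrightarrow> a * b \<in> circle"
  by (simp add: circle_iff_norm norm_mult)

lemma circle_mult_iff: "a \<in> circle \<Longrightarrow> a * b \<in> circle \<longleftrightarrow> b \<in> circle"
  by (simp add: circle_iff_norm norm_mult)

lemma circle_power: "w \<in> circle \<Longrightarrow> w ^ m \<in> circle"
  by (simp add: circle_iff_norm norm_power)

lemma circle_cnj: "a \<in> circle \<Longrightarrow> cnj a \<in> circle"
  by (simp add: circle_iff_norm)

lemma circle_mult_image:
  assumes "a \<in> circle"
  shows "(\<lambda>w. a * w) ` circle = circle"
proof
  show "circle \<subseteq> (\<lambda>w. a * w) ` circle"
  proof
    fix w assume "w \<in> circle"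
    moreover have "w = a * (cnj a * w)"
      using assms by (simp add: circle_iff_norm mult.assoc[symmetric] complex_norm_square[symmetric])
    ultimately show "w \<in> (\<lambda>w. a * w) ` circle"
      using assms by (metis circle_cnj circle_mult image_eqI)
  qed
qed (use assms circle_mult in blast)

lemma circle_cnj_mult: "a \<in> circle \<Longrightarrow> cnj a * a = 1"
  by (metis complex_norm_square circle_iff_norm mult.commute of_real_1 power_one)

lemma circle_mult_cnj: "a \<in> circle \<Longrightarrow> a * cnj a = 1"
  using circle_cnj_mult by (simp add: mult.commute)

lemma cis_Arg_circle: "c \<in> circle \<Longrightarrow> cis (Arg c) = c"
  using cis_Arg[of c] by (cases "c = 0") (auto simp: circle_iff_norm sgn_div_norm)

definition circle_root :: "nat \<Rightarrow> complex \<Rightarrow> complex" where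
  "circle_root m z = (SOME w. w \<in> circle \<and> w ^ m = z)"

lemma circle_root:
  assumes "m > 0" and z: "z \<in> circle"
  shows "circle_root m z \<in> circle" "circle_root m z ^ m = z"
proof -
  have "cis (Arg z / m) ^ m = cis (real m * (Arg z / m))" by (rule Complex.DeMoivre)
  also have "\<dots> = z" using assms by (simp add: cis_Arg_circle)
  finally have "cis (Arg z / m) ^ m = z" .
  then have "\<exists>w. w \<in> circle \<and> w ^ m = z" using cis_in_circle by blast
  then have "circle_root m z \<in> circle \<and> circle_root m z ^ m = z"
    unfolding circle_root_def by (rule someI_ex)
  then show "circle_root m z \<in> circle" "circle_root m z ^ m = z" by auto
qed

lemma power_image_circle:
  assumes "m > 0"
  shows "(\<lambda>w. w ^ m) ` circle = circle"
proof
  show "circle \<subseteq> (\<lambda>w. w ^ m) ` circle"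
    using circle_root[OF assms] by (metis image_eqI subsetI)
qed (use circle_power in blast)

section \<open>Closed subgroups of the circle\<close>

lemma real_subgroup_int_mult:
  fixes T :: "real set"
  assumes diff: "\<And>s t. s \<in> T \<Longrightarrow> t \<in> T \<Longrightarrow> s - t \<in> T" and t: "t \<in> T"
  shows "of_int n * t \<in> T"
proof -
  have zero: "0 \<in> T" using diff[OF t t] by simp
  have neg: "- s \<in> T" if "s \<in> T" for s using diff[OF zero that] by simp
  show ?thesis
  proof (induction n rule: int_induct[of _ 0])
    case (step1 i)
    then show ?case using diff[OF step1(2) neg[OF t]] by (simp add: algebra_simps)
  next
    case (step2 i)
    then show ?case using diff[OF step2(2) t] by (simp add: algebra_simps)
  qed (simp add: zero)
qed

lemma real_subgroup_dense_eq_UNIV: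
  fixes T :: "real set"
  assumes "closed T" and diff: "\<And>s t. s \<in> T \<Longrightarrow> t \<in> T \<Longrightarrow> s - t \<in> T"
    and small: "\<And>e. e > 0 \<Longrightarrow> \<exists>t\<in>T. 0 < t \<and> t < e"
  shows "T = UNIV"
proof -
  have "\<exists>y\<in>T. dist y r < e" if "e > 0" for r e
  proof -
    obtain s where s: "s \<in> T" "0 < s" "s < e" using small[OF \<open>e > 0\<close>] by blast
    define n where "n = floor (r / s)"
    have "of_int n * s \<le> r" "r < of_int n * s + s"
      using floor_divide_lower[OF s(2), of r] floor_divide_upper[OF s(2), of r]
      by (simp_all add: n_def algebra_simps)
    then have "dist (of_int n * s) r < e" using s by (simp add: dist_real_def)
    then show ?thesis using real_subgroup_int_mult[OF diff s(1)] by blast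
  qed
  then show ?thesis using closed_approachable[OF \<open>closed T\<close>] by blast
qed

text \<open>The generator is the least element of \<open>T\<close> that is at least \<open>e\<close>.\<close>
lemma real_subgroup_discrete_cyclic:
  fixes T :: "real set"
  assumes "closed T" and diff: "\<And>s t. s \<in> T \<Longrightarrow> t \<in> T \<Longrightarrow> s - t \<in> T"
    and "p \<in> T" "p > 0" and "e > 0" and gap: "\<And>t. t \<in> T \<Longrightarrow> \<not> (0 < t \<and> t < e)"
  shows "\<exists>a>0. T = range (\<lambda>k::int. of_int k * a)"
proof -
  define P where "P = T \<inter> {e..}"
  have "p \<in> P" using assms(3,4) gap[of p] by (force simp: P_def)
  moreover have "closed P" "bdd_below P"
    using \<open>closed T\<close> by (auto simp: P_def intro!: bdd_belowI[of _ e])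
  ultimately have "Inf P \<in> P" using closed_contains_Inf by blast
  define a where "a = Inf P"
  have aT: "a \<in> T" and "a \<ge> e" using \<open>Inf P \<in> P\<close> by (auto simp: a_def P_def)
  then have apos: "a > 0" using \<open>e > 0\<close> by linarith
  have "\<exists>k::int. t = of_int k * a" if t: "t \<in> T" for t
  proof -
    define k where "k = floor (t / a)"
    define r where "r = t - of_int k * a"
    have rT: "r \<in> T" unfolding r_def by (intro diff t real_subgroup_int_mult[OF diff aT])
    have "0 \<le> r" "r < a"
      using floor_divide_lower[OF apos, of t] floor_divide_upper[OF apos, of t]
      by (simp_all add: r_def k_def algebra_simps)
    moreover have "a \<le> r" if "r > 0"
      using rT gap[OF rT] that \<open>bdd_below P\<close> by (auto simp: a_def P_def intro!: cInf_lower)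
    ultimately have "r = 0" by fastforce
    then show ?thesis unfolding r_def by auto
  qed
  then have "T = range (\<lambda>k::int. of_int k * a)"
    using real_subgroup_int_mult[OF diff aT] by blast
  then show ?thesis using apos by blast
qed

lemma closed_real_subgroup_cases:
  fixes T :: "real set"
  assumes "closed T" and "\<And>s t. s \<in> T \<Longrightarrow> t \<in> T \<Longrightarrow> s - t \<in> T" and "p \<in> T" "p > 0"
  shows "T = UNIV \<or> (\<exists>a>0. T = range (\<lambda>k::int. of_int k * a))"
proof (cases "\<forall>e>0. \<exists>t\<in>T. 0 < t \<and> t < e")
  case True
  then show ?thesis using real_subgroup_dense_eq_UNIV[OF assms(1,2)] by blast
next
  case False
  then obtain e where "e > 0" "\<And>t. t \<in> T \<Longrightarrow> \<not> (0 < t \<and> t < e)" by blast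
  then show ?thesis using real_subgroup_discrete_cyclic[OF assms] by blast
qed

lemma closed_circle_subgroup_cases:
  assumes "closed G" and sub: "G \<subseteq> circle" and one: "1 \<in> G"
    and mult: "\<And>c d. c \<in> G \<Longrightarrow> d \<in> G \<Longrightarrow> c * d \<in> G"
    and cnj: "\<And>c. c \<in> G \<Longrightarrow> cnj c \<in> G"
  shows "G = circle \<or> (\<exists>m>0. G = {c \<in> circle. c ^ m = 1})"
proof -
  define T where "T = cis -` G"
  have "continuous_on UNIV (\<lambda>t. cis t)" by (intro continuous_intros)
  then have "closed T"
    unfolding T_def by (rule closed_vimage[OF \<open>closed G\<close>])
  moreover have "s - t \<in> T" if "s \<in> T" "t \<in> T" for s t
  proof -
    have "cis (s - t) = cis s * cnj (cis t)" by (simp add: cis_cnj cis_mult)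
    then show ?thesis using mult[OF _ cnj] that by (simp add: T_def)
  qed
  moreover have "2 * pi \<in> T" using one by (simp add: T_def)
  moreover have "(0::real) < 2 * pi" by simp
  ultimately have "T = UNIV \<or> (\<exists>a>0. T = range (\<lambda>k::int. of_int k * a))"
    by (rule closed_real_subgroup_cases)
  moreover have G_Arg: "c \<in> G \<longleftrightarrow> c \<in> circle \<and> Arg c \<in> T" for c
    using sub cis_Arg_circle by (auto simp: T_def)
  ultimately show ?thesis
  proof (elim disjE exE conjE)
    assume "T = UNIV"
    then show ?thesis using G_Arg by auto
  next
    fix a :: real assume "a > 0" and Ta: "T = range (\<lambda>k::int. of_int k * a)"
    then obtain k :: int where k: "2 * pi = of_int k * a" using \<open>2 * pi \<in> T\<close> by auto
    then have "0 < of_int k * a" using pi_gt_zero by linarith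
    then have "(0::real) < of_int k" using \<open>a > 0\<close> by (rule zero_less_mult_pos2)
    then have "k > 0" by simp
    define m where "m = nat k"
    have mk: "real m = of_int k" using \<open>k > 0\<close> by (simp add: m_def)
    have "c ^ m = 1 \<longleftrightarrow> Arg c \<in> T" if "c \<in> circle" for c
    proof -
      have "c ^ m = cis (real m * Arg c)"
        using cis_Arg_circle[OF that] Complex.DeMoivre by metis
      also have "\<dots> = 1 \<longleftrightarrow> (\<exists>n::int. real m * Arg c = of_int n * (2 * pi))"
        by (simp add: cis_eq_1_iff)
      also have "\<dots> \<longleftrightarrow> (\<exists>n::int. Arg c = of_int n * a)"
      proof -
        have "real m * Arg c = of_int n * (2 * pi) \<longleftrightarrow> Arg c = of_int n * a" for n :: int
        proof -
          have e: "of_int n * (2 * pi) = real m * (of_int n * a)" by (simp add: k mk)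
          have "real m \<noteq> 0" using \<open>k > 0\<close> mk by simp
          then show ?thesis unfolding e by simp
        qed
        then show ?thesis by simp
      qed
      finally show ?thesis by (auto simp: Ta)
    qed
    then have "G = {c \<in> circle. c ^ m = 1}" using G_Arg by auto
    moreover have "m > 0" using \<open>k > 0\<close> by (simp add: m_def)
    ultimately show ?thesis by blast
  qed
qed

section \<open>Fiberwise sup norm\<close>

lemma continuous_on_fiber:
  assumes "continuous_on (UNIV \<times> circle) h"
  shows "continuous_on circle (\<lambda>w. h (x, w))"
  by (rule continuous_on_compose2[OF assms]) (auto intro!: continuous_intros)

definition fiber_sup :: "('a \<times> complex \<Rightarrow> complex) \<Rightarrow> 'a \<Rightarrow> real" where
  "fiber_sup h x = (SUP w\<in>circle. norm (h (x, w)))"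

lemma fiber_sup_upper:
  assumes "continuous_on (UNIV \<times> circle) h" "w \<in> circle"
  shows "norm (h (x, w)) \<le> fiber_sup h x"
proof -
  have "compact ((\<lambda>w. norm (h (x, w))) ` circle)"
    by (intro compact_continuous_image continuous_on_norm continuous_on_fiber assms compact_circle)
  then have "bdd_above ((\<lambda>w. norm (h (x, w))) ` circle)"
    by (simp add: bounded_imp_bdd_above compact_imp_bounded)
  then show ?thesis unfolding fiber_sup_def using assms(2) by (rule cSUP_upper2) auto
qed

lemma fiber_sup_least:
  assumes "\<And>w. w \<in> circle \<Longrightarrow> norm (h (x, w)) \<le> M"
  shows "fiber_sup h x \<le> M"
  unfolding fiber_sup_def by (rule cSUP_least) (use assms one_in_circle in blast)+

lemma continuous_on_fiber_sup:
  fixes h :: "'a::t2_space \<times> complex \<Rightarrow> complex"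
  assumes cont: "continuous_on (UNIV \<times> circle) h"
  shows "continuous_on UNIV (fiber_sup h)"
proof -
  have "isCont (fiber_sup h) x0" for x0
    unfolding continuous_at tendsto_iff
  proof (intro allI impI)
    fix e :: real assume "e > 0"
    then have "e/2 > 0" by simp
    then obtain X0 where X0: "x0 \<in> X0" "open X0"
      "\<forall>x\<in>X0 \<inter> UNIV. \<forall>w \<in> circle. dist (h (x, w)) (h (x0, w)) \<le> e/2"
      by (rule continuous_on_prod_compactE[OF cont compact_circle UNIV_I])
    have near: "\<bar>fiber_sup h x - fiber_sup h x0\<bar> \<le> e/2" if "x \<in> X0" for x
    proof -
      have close: "\<bar>norm (h (x, w)) - norm (h (x0, w))\<bar> \<le> e/2" if "w \<in> circle" for w
      proof -
        have "norm (h (x, w) - h (x0, w)) \<le> e/2"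
          using X0(3) \<open>x \<in> X0\<close> that by (simp add: dist_norm)
        then show ?thesis using norm_triangle_ineq3[of "h (x, w)" "h (x0, w)"] by linarith
      qed
      have "fiber_sup h x \<le> fiber_sup h x0 + e/2"
      proof (rule fiber_sup_least)
        fix w assume w: "w \<in> circle"
        show "norm (h (x, w)) \<le> fiber_sup h x0 + e/2"
          using close[OF w] fiber_sup_upper[OF cont w, of x0] by linarith
      qed
      moreover have "fiber_sup h x0 \<le> fiber_sup h x + e/2"
      proof (rule fiber_sup_least)
        fix w assume w: "w \<in> circle"
        show "norm (h (x0, w)) \<le> fiber_sup h x + e/2"
          using close[OF w] fiber_sup_upper[OF cont w, of x] by linarith
      qed
      ultimately show ?thesis by linarith
    qed
    have "dist (fiber_sup h x) (fiber_sup h x0) < e" if "x \<in> X0" for x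
      using near[OF that] \<open>e > 0\<close> unfolding dist_real_def by linarith
    then show "\<forall>\<^sub>F x in at x0. dist (fiber_sup h x) (fiber_sup h x0) < e"
      unfolding eventually_at_topological using X0(1,2) by blast
  qed
  then show ?thesis by (simp add: continuous_at_imp_continuous_on)
qed

section \<open>The fixed-point algebra\<close>

lemma fixed_algD:
  assumes "h \<in> fixed_alg \<theta> f"
  shows "continuous_on (UNIV \<times> circle) h" "\<And>p. p \<notin> UNIV \<times> circle \<Longrightarrow> h p = 0"
    "\<And>x w. w \<in> circle \<Longrightarrow> h (\<theta> x, f x * w) = h (x, w)"
  using assms by (auto simp: fixed_alg_def Cfun_def skew_def)

lemma fixed_algI:
  assumes "continuous_on (UNIV \<times> circle) h" "\<And>x w. w \<notin> circle \<Longrightarrow> h (x, w) = 0"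
    "\<And>x w. w \<in> circle \<Longrightarrow> h (\<theta> x, f x * w) = h (x, w)"
  shows "h \<in> fixed_alg \<theta> f"
  using assms by (auto simp: fixed_alg_def Cfun_def skew_def)

lemma fixed_alg_add:
  "g \<in> fixed_alg \<theta> f \<Longrightarrow> h \<in> fixed_alg \<theta> f \<Longrightarrow> (\<lambda>p. g p + h p) \<in> fixed_alg \<theta> f"
  by (intro fixed_algI) (auto simp: fixed_algD intro!: continuous_intros)

lemma fixed_alg_diff:
  "g \<in> fixed_alg \<theta> f \<Longrightarrow> h \<in> fixed_alg \<theta> f \<Longrightarrow> (\<lambda>p. g p - h p) \<in> fixed_alg \<theta> f"
  by (intro fixed_algI) (auto simp: fixed_algD intro!: continuous_intros)

lemma fixed_alg_mult:
  "g \<in> fixed_alg \<theta> f \<Longrightarrow> h \<in> fixed_alg \<theta> f \<Longrightarrow> (\<lambda>p. g p * h p) \<in> fixed_alg \<theta> f"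
  by (intro fixed_algI) (auto simp: fixed_algD intro!: continuous_intros)

lemma fixed_alg_scale: "h \<in> fixed_alg \<theta> f \<Longrightarrow> (\<lambda>p. c * h p) \<in> fixed_alg \<theta> f"
  by (intro fixed_algI) (auto simp: fixed_algD intro!: continuous_intros)

lemma fixed_alg_cnj: "h \<in> fixed_alg \<theta> f \<Longrightarrow> (\<lambda>p. cnj (h p)) \<in> fixed_alg \<theta> f"
  by (intro fixed_algI) (auto simp: fixed_algD intro!: continuous_intros)

definition const_on_circle :: "complex \<Rightarrow> 'a \<times> complex \<Rightarrow> complex" where
  "const_on_circle c = (\<lambda>(x, w). if w \<in> circle then c else 0)"

lemma const_on_circle_fixed:
  assumes "\<And>x. f x \<in> circle"
  shows "const_on_circle c \<in> fixed_alg \<theta> f"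
proof (rule fixed_algI)
  show "continuous_on (UNIV \<times> circle) (const_on_circle c)"
    by (rule continuous_on_eq[OF continuous_on_const]) (auto simp: const_on_circle_def)
qed (auto simp: const_on_circle_def circle_mult_iff assms)

definition rotate_fiber :: "complex \<Rightarrow> ('a \<times> complex \<Rightarrow> complex) \<Rightarrow> 'a \<times> complex \<Rightarrow> complex" where
  "rotate_fiber c h = (\<lambda>(x, w). h (x, c * w))"

lemma rotate_fiber_fixed:
  assumes h: "h \<in> fixed_alg \<theta> f" and c: "c \<in> circle"
  shows "rotate_fiber c h \<in> fixed_alg \<theta> f"
proof (rule fixed_algI)
  have "continuous_on (UNIV \<times> circle) (\<lambda>p. h (fst p, c * snd p))"
    by (rule continuous_on_compose2[OF fixed_algD(1)[OF h]])
       (auto intro!: continuous_intros simp: circle_mult c)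
  then show "continuous_on (UNIV \<times> circle) (rotate_fiber c h)"
    by (simp add: rotate_fiber_def case_prod_beta)
  show "rotate_fiber c h (x, w) = 0" if "w \<notin> circle" for x w
    using that fixed_algD(2)[OF h] by (simp add: rotate_fiber_def circle_mult_iff c)
  show "rotate_fiber c h (\<theta> x, f x * w) = rotate_fiber c h (x, w)" if "w \<in> circle" for x w
    using fixed_algD(3)[OF h, of "c * w" x] that c
    by (simp add: rotate_fiber_def circle_mult mult.left_commute)
qed

definition rotation_stabilizer :: "('a \<times> complex \<Rightarrow> complex) set \<Rightarrow> complex set" where
  "rotation_stabilizer A = {c \<in> circle. \<forall>h\<in>A. \<forall>x w. w \<in> circle \<longrightarrow> h (x, c * w) = h (x, w)}"

lemma rotation_stabilizer_subset: "rotation_stabilizer A \<subseteq> circle"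
  by (auto simp: rotation_stabilizer_def)

lemma one_in_rotation_stabilizer: "1 \<in> rotation_stabilizer A"
  by (auto simp: rotation_stabilizer_def)

lemma rotation_stabilizer_mult:
  "c \<in> rotation_stabilizer A \<Longrightarrow> d \<in> rotation_stabilizer A \<Longrightarrow> c * d \<in> rotation_stabilizer A"
  by (auto simp: rotation_stabilizer_def circle_mult mult.assoc)

lemma rotation_stabilizer_cnj:
  assumes c: "c \<in> rotation_stabilizer A"
  shows "cnj c \<in> rotation_stabilizer A"
proof -
  have cc: "c \<in> circle" using c by (auto simp: rotation_stabilizer_def)
  have "h (x, cnj c * w) = h (x, w)" if "h \<in> A" "w \<in> circle" for h x w
  proof -
    have "h (x, c * (cnj c * w)) = h (x, cnj c * w)"
      using c that by (auto simp: rotation_stabilizer_def circle_mult circle_cnj cc)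
    moreover have "c * (cnj c * w) = w"
      using circle_mult_cnj[OF cc] by (simp add: mult.assoc[symmetric])
    ultimately show ?thesis by simp
  qed
  then show ?thesis using cc by (auto simp: rotation_stabilizer_def circle_cnj)
qed

lemma closed_rotation_stabilizer:
  assumes cont: "\<And>h. h \<in> A \<Longrightarrow> continuous_on (UNIV \<times> circle) h"
  shows "closed (rotation_stabilizer A)"
  unfolding closed_sequential_limits
proof (intro allI impI, elim conjE)
  fix cs c assume cs: "\<forall>n. cs n \<in> rotation_stabilizer A" and lim: "cs \<longlonglongrightarrow> c"
  have csc: "cs n \<in> circle" for n using cs rotation_stabilizer_subset by blast
  then have cc: "c \<in> circle"
    using closed_sequential_limits[THEN iffD1, OF closed_sphere[of 0 1]] lim
    unfolding circle_def by blast
  have "h (x, c * w) = h (x, w)" if h: "h \<in> A" and w: "w \<in> circle" for h x w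
  proof -
    have "((\<lambda>n. (x, cs n * w)) \<longlongrightarrow> (x, c * w)) sequentially"
      by (intro tendsto_intros lim)
    then have "((\<lambda>n. h (x, cs n * w)) \<longlongrightarrow> h (x, c * w)) sequentially"
      by (rule continuous_on_tendsto_compose[OF cont[OF h]])
         (simp_all add: csc circle_mult w cc)
    moreover have "(\<lambda>n. h (x, cs n * w)) = (\<lambda>n. h (x, w))"
      using cs h w by (auto simp: rotation_stabilizer_def)
    ultimately show ?thesis by (simp add: LIMSEQ_const_iff)
  qed
  then show "c \<in> rotation_stabilizer A" using cc by (auto simp: rotation_stabilizer_def)
qed

lemma fixed_eq_const_if_skew_ergodic:
  assumes "skew_ergodic \<theta> f" and h: "h \<in> fixed_alg \<theta> f"
  shows "h = const_on_circle (h (x, 1))"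
proof -
  obtain c where c: "\<forall>p \<in> UNIV \<times> circle. h p = c"
    using assms unfolding skew_ergodic_def by blast
  then have "h = const_on_circle c"
    using fixed_algD(2)[OF h] by (auto simp: fun_eq_iff const_on_circle_def)
  then show ?thesis using c by simp
qed

lemma star_isomorphic_to_C_if_skew_ergodic:
  assumes f: "\<And>x. f x \<in> circle" and erg: "skew_ergodic \<theta> f"
  shows "star_isomorphic_to_C (fixed_alg \<theta> f)"
proof -
  let ?\<phi> = "\<lambda>h::'a \<times> complex \<Rightarrow> complex. h (undefined, 1)"
  have "inj_on ?\<phi> (fixed_alg \<theta> f)"
  proof (rule inj_onI)
    fix g h assume "g \<in> fixed_alg \<theta> f" "h \<in> fixed_alg \<theta> f" "?\<phi> g = ?\<phi> h"
    then show "g = h"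
      using fixed_eq_const_if_skew_ergodic[OF erg, of _ undefined] by metis
  qed
  moreover have "c \<in> ?\<phi> ` fixed_alg \<theta> f" for c
    using const_on_circle_fixed[OF f, of c]
    by (intro image_eqI[of _ _ "const_on_circle c"]) (auto simp: const_on_circle_def)
  ultimately have "bij_betw ?\<phi> (fixed_alg \<theta> f) UNIV"
    unfolding bij_betw_def by blast
  then show ?thesis
    unfolding star_isomorphic_to_C_def by (intro exI[of _ ?\<phi>]) simp
qed

lemma skew_ergodic_if_star_isomorphic_to_C:
  assumes f: "\<And>x. f x \<in> circle" and iso: "star_isomorphic_to_C (fixed_alg \<theta> f)"
  shows "skew_ergodic \<theta> f"
proof -
  let ?A = "fixed_alg \<theta> f"
  obtain \<phi> where bij: "bij_betw \<phi> ?A (UNIV :: complex set)"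
    and mult: "\<forall>g\<in>?A. \<forall>h\<in>?A. \<phi> (\<lambda>p. g p * h p) = \<phi> g * \<phi> h"
    and scale: "\<forall>c. \<forall>h\<in>?A. \<phi> (\<lambda>p. c * h p) = c * \<phi> h"
    using iso unfolding star_isomorphic_to_C_def by blast
  have one: "const_on_circle 1 \<in> ?A" by (rule const_on_circle_fixed[OF f])
  obtain u where u: "u \<in> ?A" "\<phi> u = 1"
    using bij unfolding bij_betw_def by (metis UNIV_I imageE)
  have unit: "(\<lambda>p. const_on_circle 1 p * u p) = u"
    using fixed_algD(2)[OF u(1)] by (auto simp: const_on_circle_def fun_eq_iff)
  have "\<phi> (const_on_circle 1) * \<phi> u = \<phi> u"
    using mult one u(1) unit by metis
  then have \<phi>_one: "\<phi> (const_on_circle 1) = 1" using u(2) by simp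
  have \<phi>_const: "\<phi> (const_on_circle c) = c" for c
  proof -
    have "(\<lambda>p. c * const_on_circle 1 p) = const_on_circle c"
      by (auto simp: const_on_circle_def fun_eq_iff)
    then show ?thesis using scale one \<phi>_one by (metis mult.right_neutral)
  qed
  show ?thesis unfolding skew_ergodic_def
  proof
    fix h assume h: "h \<in> ?A"
    have "const_on_circle (\<phi> h) \<in> ?A" by (rule const_on_circle_fixed[OF f])
    then have eq: "const_on_circle (\<phi> h) = h"
      using bij \<phi>_const[of "\<phi> h"] h unfolding bij_betw_def by (metis inj_onD)
    have "h p = \<phi> h" if "p \<in> UNIV \<times> circle" for p
      using fun_cong[OF eq, of p] that by (auto simp: const_on_circle_def)
    then show "\<exists>c. \<forall>p\<in>UNIV \<times> circle. h p = c" by blast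
  qed
qed

lemma fixed_alg_uniform_limit:
  assumes f: "\<And>x. f x \<in> circle" and hs: "\<And>n. hs n \<in> fixed_alg \<theta> f"
    and lim: "uniform_limit (UNIV \<times> circle) hs H sequentially"
  shows "(\<lambda>p. if p \<in> UNIV \<times> circle then H p else 0) \<in> fixed_alg \<theta> f"
proof (rule fixed_algI)
  have "continuous_on (UNIV \<times> circle) H"
    by (rule uniform_limit_theorem[OF _ lim]) (auto intro: always_eventually fixed_algD(1)[OF hs])
  then show "continuous_on (UNIV \<times> circle) (\<lambda>p. if p \<in> UNIV \<times> circle then H p else 0)"
    by (rule continuous_on_eq) auto
  fix x w
  show "w \<notin> circle \<Longrightarrow> (if (x, w) \<in> UNIV \<times> circle then H (x, w) else 0) = 0" by simp
  assume w: "w \<in> circle"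
  then have fw: "f x * w \<in> circle" using f by (simp add: circle_mult)
  have "(\<lambda>n. hs n (\<theta> x, f x * w)) \<longlonglongrightarrow> H (\<theta> x, f x * w)"
    by (rule tendsto_uniform_limitI[OF lim]) (simp add: fw)
  moreover have "(\<lambda>n. hs n (\<theta> x, f x * w)) = (\<lambda>n. hs n (x, w))"
    using fixed_algD(3)[OF hs w] by simp
  moreover have "(\<lambda>n. hs n (x, w)) \<longlonglongrightarrow> H (x, w)"
    by (rule tendsto_uniform_limitI[OF lim]) (simp add: w)
  ultimately have "H (\<theta> x, f x * w) = H (x, w)" using LIMSEQ_unique by metis
  then show "(if (\<theta> x, f x * w) \<in> UNIV \<times> circle then H (\<theta> x, f x * w) else 0) =
             (if (x, w) \<in> UNIV \<times> circle then H (x, w) else 0)"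
    using w fw by simp
qed

section \<open>Ergodicity of the base\<close>

locale ergodic_skew =
  fixes \<theta> :: "'a::t2_space \<Rightarrow> 'a" and f :: "'a \<Rightarrow> complex"
  assumes ergodic: "top_ergodic \<theta>" and f_circle: "\<And>x. f x \<in> circle"
begin

lemma invariant_eq:
  fixes g :: "'a \<Rightarrow> complex"
  assumes "continuous_on UNIV g" "\<And>x. g (\<theta> x) = g x"
  shows "g x = g y"
proof -
  have "g \<circ> \<theta> = g" using assms(2) by (simp add: o_def fun_eq_iff)
  then obtain c where "g = (\<lambda>_. c)"
    using ergodic assms(1) unfolding top_ergodic_def by blast
  then show ?thesis by simp
qed

lemma fiber_sup_shift:
  assumes h: "h \<in> fixed_alg \<theta> f"
  shows "fiber_sup h (\<theta> x) = fiber_sup h x"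
proof -
  have "(\<lambda>w. f x * w) ` circle = circle" by (rule circle_mult_image[OF f_circle])
  then have "(\<lambda>w. norm (h (\<theta> x, w))) ` circle = (\<lambda>w. norm (h (\<theta> x, f x * w))) ` circle"
    by (metis image_image)
  also have "\<dots> = (\<lambda>w. norm (h (x, w))) ` circle"
    using fixed_algD(3)[OF h] by (intro image_cong) auto
  finally show ?thesis by (simp add: fiber_sup_def)
qed

lemma fiber_sup_eq:
  assumes h: "h \<in> fixed_alg \<theta> f"
  shows "fiber_sup h x = fiber_sup h y"
proof -
  have "continuous_on UNIV (\<lambda>x. complex_of_real (fiber_sup h x))"
    by (intro continuous_intros continuous_on_fiber_sup fixed_algD(1)[OF h])
  then have "complex_of_real (fiber_sup h x) = complex_of_real (fiber_sup h y)"
    by (rule invariant_eq) (simp add: fiber_sup_shift[OF h])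
  then show ?thesis by simp
qed

lemma fixed_norm_le_fiber_bound:
  assumes h: "h \<in> fixed_alg \<theta> f" and bound: "\<And>w. w \<in> circle \<Longrightarrow> norm (h (y, w)) \<le> e"
  shows "norm (h p) \<le> e"
proof (cases "p \<in> UNIV \<times> circle")
  case True
  then obtain x w where p: "p = (x, w)" "w \<in> circle" by auto
  have "norm (h (x, w)) \<le> fiber_sup h x" by (rule fiber_sup_upper[OF fixed_algD(1)[OF h] p(2)])
  also have "\<dots> = fiber_sup h y" by (rule fiber_sup_eq[OF h])
  also have "\<dots> \<le> e" by (rule fiber_sup_least) (rule bound)
  finally show ?thesis using p by simp
next
  case False
  have "0 \<le> e" using bound[OF one_in_circle] norm_ge_zero order_trans by blast
  then show ?thesis using fixed_algD(2)[OF h False] by simp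
qed

lemma fixed_eq_zero_if_fiber_zero:
  assumes h: "h \<in> fixed_alg \<theta> f" and zero: "\<And>w. w \<in> circle \<Longrightarrow> h (y, w) = 0"
  shows "h p = 0"
  using fixed_norm_le_fiber_bound[OF h, of y 0 p] zero by simp

lemma uniformly_Cauchy_if_fiber_uniformly_Cauchy:
  assumes hs: "\<And>n. hs n \<in> fixed_alg \<theta> f"
    and Cauchy: "uniformly_Cauchy_on circle (\<lambda>n w. hs n (y, w))"
  shows "uniformly_Cauchy_on (UNIV \<times> circle) hs"
proof (rule uniformly_Cauchy_onI)
  fix e :: real assume "e > 0"
  then obtain M where M: "\<forall>w\<in>circle. \<forall>i\<ge>M. \<forall>j\<ge>M. dist (hs i (y, w)) (hs j (y, w)) < e/2"
    using Cauchy unfolding uniformly_Cauchy_on_def by (meson half_gt_zero)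
  have "dist (hs i p) (hs j p) < e" if "i \<ge> M" "j \<ge> M" for i j p
  proof -
    have "norm (hs i (y, w) - hs j (y, w)) \<le> e/2" if "w \<in> circle" for w
      using M \<open>i \<ge> M\<close> \<open>j \<ge> M\<close> that by (simp add: dist_norm less_imp_le)
    then have "norm (hs i p - hs j p) \<le> e/2"
      using fixed_norm_le_fiber_bound[OF fixed_alg_diff[OF hs hs], where y = y and e = "e/2" and p = p] by simp
    then show ?thesis using \<open>e > 0\<close> by (simp add: dist_norm)
  qed
  then show "\<exists>M. \<forall>p\<in>UNIV \<times> circle. \<forall>i\<ge>M. \<forall>j\<ge>M. dist (hs i p) (hs j p) < e" by blast
qed

lemma skew_ergodic_if_rotation_stabilizer_eq_circle:
  assumes G: "rotation_stabilizer (fixed_alg \<theta> f) = circle"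
  shows "skew_ergodic \<theta> f"
  unfolding skew_ergodic_def
proof
  fix h assume h: "h \<in> fixed_alg \<theta> f"
  have rot_inv: "h (x, w) = h (x, 1)" if "w \<in> circle" for x w
  proof -
    have "w \<in> rotation_stabilizer (fixed_alg \<theta> f)" using G that by simp
    then have "\<forall>x u. u \<in> circle \<longrightarrow> h (x, w * u) = h (x, u)"
      using h by (simp add: rotation_stabilizer_def)
    then have "h (x, w * 1) = h (x, 1)" using one_in_circle by blast
    then show ?thesis by simp
  qed
  define g where "g x = h (x, 1)" for x
  have cont: "continuous_on UNIV g" unfolding g_def
    by (rule continuous_on_compose2[OF fixed_algD(1)[OF h]]) (auto intro!: continuous_intros)
  have inv: "g (\<theta> x) = g x" for x
  proof -
    have fx: "f x \<in> circle" by (rule f_circle)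
    have "g (\<theta> x) = h (\<theta> x, f x * cnj (f x))" using circle_mult_cnj[OF fx] by (simp add: g_def)
    also have "\<dots> = h (x, cnj (f x))" by (rule fixed_algD(3)[OF h circle_cnj[OF fx]])
    also have "\<dots> = g x" unfolding g_def by (rule rot_inv[OF circle_cnj[OF fx]])
    finally show ?thesis .
  qed
  have "h p = g undefined" if p: "p \<in> UNIV \<times> circle" for p
  proof -
    obtain x w where "p = (x, w)" "w \<in> circle" using p by blast
    then have "h p = g x" using rot_inv[of w x] by (simp add: g_def)
    also have "\<dots> = g undefined" by (rule invariant_eq[OF cont inv])
    finally show ?thesis .
  qed
  then show "\<exists>c. \<forall>p\<in>UNIV \<times> circle. h p = c" by blast
qed

end

section \<open>Descent of a fiber to the circle\<close>

lemma continuous_on_compose_quotient: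
  fixes p :: "'a::t2_space \<Rightarrow> 'b::metric_space" and g :: "'b \<Rightarrow> 'c::metric_space"
  assumes "compact K" and "continuous_on K p" and "p ` K = L"
    and "continuous_on K (g \<circ> p)"
  shows "continuous_on L g"
proof -
  have q: "quotient_map (top_of_set K) (top_of_set L) p"
    using assms by (intro continuous_imp_quotient_map)
      (auto simp: compact_space_subtopology Hausdorff_space_subtopology)
  have "continuous_map (top_of_set K) euclidean (g \<circ> p)"
    using assms(4) by simp
  then have "continuous_map (top_of_set L) euclidean g"
    by (rule continuous_compose_quotient_map[OF q])
  then show ?thesis by simp
qed

text \<open>Any base point would do, since a fixed function is determined by any one fiber; once the
  rotation stabilizer consists of the m-th roots of unity, that fiber factors through
  \<open>w \<mapsto> w ^ m\<close>, and \<^const>\<open>circle_root\<close> picks one preimage.\<close>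
definition fiber_descent :: "nat \<Rightarrow> ('a \<times> complex \<Rightarrow> complex) \<Rightarrow> complex \<Rightarrow> complex" where
  "fiber_descent m h = (\<lambda>z. if z \<in> circle then h (undefined, circle_root m z) else 0)"

lemma fiber_descent_add:
  "fiber_descent m (\<lambda>p. g p + h p) = (\<lambda>z. fiber_descent m g z + fiber_descent m h z)"
  by (auto simp: fiber_descent_def fun_eq_iff)

lemma fiber_descent_diff:
  "fiber_descent m (\<lambda>p. g p - h p) = (\<lambda>z. fiber_descent m g z - fiber_descent m h z)"
  by (auto simp: fiber_descent_def fun_eq_iff)

lemma fiber_descent_mult:
  "fiber_descent m (\<lambda>p. g p * h p) = (\<lambda>z. fiber_descent m g z * fiber_descent m h z)"
  by (auto simp: fiber_descent_def fun_eq_iff)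

lemma fiber_descent_scale: "fiber_descent m (\<lambda>p. c * h p) = (\<lambda>z. c * fiber_descent m h z)"
  by (auto simp: fiber_descent_def fun_eq_iff)

lemma fiber_descent_cnj: "fiber_descent m (\<lambda>p. cnj (h p)) = (\<lambda>z. cnj (fiber_descent m h z))"
  by (auto simp: fiber_descent_def fun_eq_iff)

lemma fiber_descent_const:
  "m > 0 \<Longrightarrow> fiber_descent m (const_on_circle c) = (\<lambda>z. if z \<in> circle then c else 0)"
  by (auto simp: fiber_descent_def fun_eq_iff const_on_circle_def circle_root)

definition of_real_on_circle :: "(complex \<Rightarrow> real) \<Rightarrow> complex \<Rightarrow> complex" where
  "of_real_on_circle r = (\<lambda>z. if z \<in> circle then complex_of_real (r z) else 0)"

lemma of_real_on_circle_Cfun: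
  assumes "continuous_on circle r"
  shows "of_real_on_circle r \<in> Cfun circle"
proof -
  have "continuous_on circle (\<lambda>z. complex_of_real (r z))" by (intro continuous_intros assms)
  then have "continuous_on circle (of_real_on_circle r)"
    by (rule continuous_on_eq) (simp add: of_real_on_circle_def)
  then show ?thesis by (simp add: Cfun_def of_real_on_circle_def)
qed

locale ergodic_skew_periodic = ergodic_skew +
  fixes m :: nat
  assumes m_pos: "m > 0"
    and rotation_stabilizer_roots: "rotation_stabilizer (fixed_alg \<theta> f) = {c \<in> circle. c ^ m = 1}"
begin

abbreviation descent_image :: "(complex \<Rightarrow> complex) set" where
  "descent_image \<equiv> fiber_descent m ` fixed_alg \<theta> f"

lemma fixed_eq_if_power_eq:
  assumes h: "h \<in> fixed_alg \<theta> f" and w: "w \<in> circle" and w': "w' \<in> circle"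
    and "w ^ m = w' ^ m"
  shows "h (x, w') = h (x, w)"
proof -
  define c where "c = w' * cnj w"
  have "c ^ m = (w * cnj w) ^ m" using assms(4) by (simp add: c_def power_mult_distrib)
  then have "c \<in> rotation_stabilizer (fixed_alg \<theta> f)"
    using rotation_stabilizer_roots w w' by (simp add: c_def circle_mult circle_cnj circle_mult_cnj)
  then have "h (x, c * w) = h (x, w)" using h w by (auto simp: rotation_stabilizer_def)
  moreover have "c * w = w'" unfolding c_def using circle_cnj_mult[OF w] by (simp add: mult.assoc)
  ultimately show ?thesis by simp
qed

lemma fiber_descent_power:
  assumes h: "h \<in> fixed_alg \<theta> f" and w: "w \<in> circle"
  shows "fiber_descent m h (w ^ m) = h (undefined, w)"
proof -
  have wm: "w ^ m \<in> circle" by (rule circle_power[OF w])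
  then have "fiber_descent m h (w ^ m) = h (undefined, circle_root m (w ^ m))"
    by (simp add: fiber_descent_def)
  also have "\<dots> = h (undefined, w)"
    using circle_root[OF m_pos wm] by (intro fixed_eq_if_power_eq[OF h w]) auto
  finally show ?thesis .
qed

lemma fiber_descent_Cfun:
  assumes h: "h \<in> fixed_alg \<theta> f"
  shows "fiber_descent m h \<in> Cfun circle"
proof -
  have "continuous_on circle (\<lambda>w. h (undefined, w))"
    by (rule continuous_on_fiber[OF fixed_algD(1)[OF h]])
  then have comp: "continuous_on circle (fiber_descent m h \<circ> (\<lambda>w. w ^ m))"
    by (rule continuous_on_eq) (simp add: fiber_descent_power[OF h])
  have "continuous_on circle (\<lambda>w::complex. w ^ m)" by (intro continuous_intros)
  then have "continuous_on circle (fiber_descent m h)"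
    by (rule continuous_on_compose_quotient[OF compact_circle _ power_image_circle[OF m_pos] comp])
  then show ?thesis by (auto simp: Cfun_def fiber_descent_def)
qed

lemma inj_on_fiber_descent: "inj_on (fiber_descent m) (fixed_alg \<theta> f)"
proof (rule inj_onI)
  fix g h assume g: "g \<in> fixed_alg \<theta> f" and h: "h \<in> fixed_alg \<theta> f"
    and eq: "fiber_descent m g = fiber_descent m h"
  have "g p - h p = 0" for p
    by (rule fixed_eq_zero_if_fiber_zero[OF fixed_alg_diff[OF g h], of undefined])
      (simp add: fiber_descent_power[OF g, symmetric] fiber_descent_power[OF h, symmetric] eq)
  then show "g = h" by auto
qed

text \<open>Two points of the circle with m-th roots \<open>w, w'\<close> are separated by a rotate of any fixed
  function that is not invariant under the rotation by \<open>w' * cnj w\<close>, which lies outside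
  the stabilizer.\<close>
lemma fiber_descent_separates:
  assumes z: "z \<in> circle" and z': "z' \<in> circle" and "z \<noteq> z'"
  shows "\<exists>h\<in>fixed_alg \<theta> f. fiber_descent m h z \<noteq> fiber_descent m h z'"
proof -
  define w w' where "w = circle_root m z" and "w' = circle_root m z'"
  have w: "w \<in> circle" "w ^ m = z" and w': "w' \<in> circle" "w' ^ m = z'"
    using circle_root[OF m_pos z] circle_root[OF m_pos z'] by (auto simp: w_def w'_def)
  define c where "c = w' * cnj w"
  have cc: "c \<in> circle" unfolding c_def by (intro circle_mult w' circle_cnj w)
  have "c ^ m * w ^ m = w' ^ m"
    unfolding c_def power_mult_distrib[symmetric] using circle_cnj_mult[OF w(1)]
    by (simp add: mult.assoc)
  then have "c ^ m \<noteq> 1" using w w' \<open>z \<noteq> z'\<close> by auto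
  then have "c \<notin> rotation_stabilizer (fixed_alg \<theta> f)" using rotation_stabilizer_roots by simp
  then obtain h x v where h: "h \<in> fixed_alg \<theta> f" and v: "v \<in> circle"
    and "h (x, c * v) \<noteq> h (x, v)"
    using cc unfolding rotation_stabilizer_def by blast
  then have "(\<lambda>p. rotate_fiber c h p - h p) (x, v) \<noteq> 0" by (simp add: rotate_fiber_def)
  then obtain v0 where v0: "v0 \<in> circle" "h (undefined, c * v0) \<noteq> h (undefined, v0)"
    using fixed_eq_zero_if_fiber_zero[OF fixed_alg_diff[OF rotate_fiber_fixed[OF h cc] h],
        of undefined "(x, v)"]
    by (auto simp: rotate_fiber_def)
  define b where "b = v0 * cnj w"
  have b: "b \<in> circle" unfolding b_def by (intro circle_mult v0(1) circle_cnj w(1))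
  have "fiber_descent m (rotate_fiber b h) z = h (undefined, v0)"
    using fiber_descent_power[OF rotate_fiber_fixed[OF h b] w(1)] w(2) circle_cnj_mult[OF w(1)]
    by (simp add: rotate_fiber_def b_def mult.assoc)
  moreover have "fiber_descent m (rotate_fiber b h) z' = h (undefined, c * v0)"
    using fiber_descent_power[OF rotate_fiber_fixed[OF h b] w'(1)] w'(2)
    by (simp add: rotate_fiber_def b_def c_def mult_ac)
  ultimately show ?thesis
    using v0(2) by (intro bexI[OF _ rotate_fiber_fixed[OF h b]]) simp
qed

lemma descent_image_add:
  "a \<in> descent_image \<Longrightarrow> b \<in> descent_image \<Longrightarrow> (\<lambda>z. a z + b z) \<in> descent_image"
  by (auto simp: fiber_descent_add[symmetric] intro!: imageI fixed_alg_add)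

lemma descent_image_diff:
  "a \<in> descent_image \<Longrightarrow> b \<in> descent_image \<Longrightarrow> (\<lambda>z. a z - b z) \<in> descent_image"
  by (auto simp: fiber_descent_diff[symmetric] intro!: imageI fixed_alg_diff)

lemma descent_image_mult:
  "a \<in> descent_image \<Longrightarrow> b \<in> descent_image \<Longrightarrow> (\<lambda>z. a z * b z) \<in> descent_image"
  by (auto simp: fiber_descent_mult[symmetric] intro!: imageI fixed_alg_mult)

lemma descent_image_scale: "b \<in> descent_image \<Longrightarrow> (\<lambda>z. c * b z) \<in> descent_image"
  by (auto simp: fiber_descent_scale[symmetric] intro!: imageI fixed_alg_scale)

lemma descent_image_cnj: "b \<in> descent_image \<Longrightarrow> (\<lambda>z. cnj (b z)) \<in> descent_image"
  by (auto simp: fiber_descent_cnj[symmetric] intro!: imageI fixed_alg_cnj)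

lemma descent_image_const: "(\<lambda>z. if z \<in> circle then c else 0) \<in> descent_image"
proof (rule image_eqI)
  show "const_on_circle c \<in> fixed_alg \<theta> f" by (rule const_on_circle_fixed[OF f_circle])
qed (rule fiber_descent_const[OF m_pos, symmetric])

lemma uniformly_Cauchy_if_descent_uniformly_Cauchy:
  assumes hs: "\<And>n. hs n \<in> fixed_alg \<theta> f"
    and Cauchy: "uniformly_Cauchy_on circle (\<lambda>n. fiber_descent m (hs n))"
  shows "uniformly_Cauchy_on (UNIV \<times> circle) hs"
proof (rule uniformly_Cauchy_if_fiber_uniformly_Cauchy[OF hs])
  show "uniformly_Cauchy_on circle (\<lambda>n w. hs n (undefined, w))"
  proof (rule uniformly_Cauchy_onI)
    fix e :: real assume "e > 0"
    then obtain M
      where M: "\<forall>z\<in>circle. \<forall>i\<ge>M. \<forall>j\<ge>M. dist (fiber_descent m (hs i) z) (fiber_descent m (hs j) z) < e"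
      using Cauchy unfolding uniformly_Cauchy_on_def by blast
    have "dist (hs i (undefined, w)) (hs j (undefined, w)) < e"
      if "w \<in> circle" "i \<ge> M" "j \<ge> M" for w i j
      using M circle_power[OF \<open>w \<in> circle\<close>, of m] that
      by (simp add: fiber_descent_power[OF hs, symmetric])
    then show "\<exists>M. \<forall>w\<in>circle. \<forall>i\<ge>M. \<forall>j\<ge>M. dist (hs i (undefined, w)) (hs j (undefined, w)) < e"
      by blast
  qed
qed

lemma descent_image_uniform_limit:
  assumes F: "\<And>n. F n \<in> descent_image" and lim: "uniform_limit circle F k sequentially"
    and k: "k \<in> Cfun circle"
  shows "k \<in> descent_image"
proof -
  have "\<forall>n. \<exists>h. h \<in> fixed_alg \<theta> f \<and> F n = fiber_descent m h" using F by blast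
  then obtain hs where "\<forall>n. hs n \<in> fixed_alg \<theta> f \<and> F n = fiber_descent m (hs n)"
    by (metis choice)
  then have hs: "\<And>n. hs n \<in> fixed_alg \<theta> f" "\<And>n. F n = fiber_descent m (hs n)" by auto
  have "uniformly_Cauchy_on circle F"
    using lim by (intro uniformly_convergent_Cauchy) (auto simp: uniformly_convergent_on_def)
  then have "uniformly_Cauchy_on (UNIV \<times> circle) hs"
    using uniformly_Cauchy_if_descent_uniformly_Cauchy[OF hs(1)] by (simp add: hs(2)[symmetric])
  then obtain H where H: "uniform_limit (UNIV \<times> circle) hs H sequentially"
    using Cauchy_uniformly_convergent unfolding uniformly_convergent_on_def by blast
  define H' where "H' p = (if p \<in> UNIV \<times> circle then H p else 0)" for p
  have H': "H' \<in> fixed_alg \<theta> f"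
    unfolding H'_def by (rule fixed_alg_uniform_limit[OF f_circle hs(1) H])
  have "fiber_descent m H' = k"
  proof
    fix z
    show "fiber_descent m H' z = k z"
    proof (cases "z \<in> circle")
      case True
      define w where "w = circle_root m z"
      have w: "w \<in> circle" using circle_root(1)[OF m_pos True] by (simp add: w_def)
      have "(\<lambda>n. F n z) \<longlonglongrightarrow> H (undefined, w)"
        using tendsto_uniform_limitI[OF H, of "(undefined, w)"] w True
        by (simp add: hs(2) fiber_descent_def w_def)
      moreover have "(\<lambda>n. F n z) \<longlonglongrightarrow> k z" by (rule tendsto_uniform_limitI[OF lim True])
      ultimately have "H (undefined, w) = k z" by (rule LIMSEQ_unique)
      then show ?thesis using True w by (simp add: fiber_descent_def H'_def w_def)
    next
      case False
      then show ?thesis using k by (simp add: fiber_descent_def Cfun_def)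
    qed
  qed
  then show ?thesis using H' by blast
qed

lemma descent_image_Cfun: "b \<in> descent_image \<Longrightarrow> b \<in> Cfun circle"
  using fiber_descent_Cfun by blast

lemma descent_image_re_im:
  assumes "b \<in> descent_image"
  shows "of_real_on_circle (\<lambda>z. Re (b z)) \<in> descent_image"
    "of_real_on_circle (\<lambda>z. Im (b z)) \<in> descent_image"
proof -
  have b0: "z \<notin> circle \<Longrightarrow> b z = 0" for z using descent_image_Cfun[OF assms] by (simp add: Cfun_def)
  have re: "of_real_on_circle (\<lambda>z. Re (b z)) = (\<lambda>z. (1/2) * (b z + cnj (b z)))"
    by (auto simp: of_real_on_circle_def fun_eq_iff b0 complex_add_cnj)
  show "of_real_on_circle (\<lambda>z. Re (b z)) \<in> descent_image"
    unfolding re by (intro descent_image_scale descent_image_add descent_image_cnj assms)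
  have im: "of_real_on_circle (\<lambda>z. Im (b z)) = (\<lambda>z. (- \<i> / 2) * (b z - cnj (b z)))"
    by (auto simp: of_real_on_circle_def fun_eq_iff b0 complex_diff_cnj complex_eq_iff)
  show "of_real_on_circle (\<lambda>z. Im (b z)) \<in> descent_image"
    unfolding im by (intro descent_image_scale descent_image_diff descent_image_cnj assms)
qed

lemma of_real_on_circle_in_descent_image:
  assumes r: "continuous_on circle r"
  shows "of_real_on_circle r \<in> descent_image"
proof -
  let ?R = "{r. of_real_on_circle r \<in> descent_image}"
  have "function_ring_on ?R circle"
  proof unfold_locales
    show "continuous_on circle r" if "r \<in> ?R" for r
    proof -
      have "of_real_on_circle r \<in> Cfun circle" using descent_image_Cfun that by blast
      then have "continuous_on circle (of_real_on_circle r)" by (simp add: Cfun_def)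
      then have "continuous_on circle (\<lambda>z. Re (of_real_on_circle r z))"
        by (intro continuous_intros)
      then show ?thesis by (rule continuous_on_eq) (simp add: of_real_on_circle_def)
    qed
    show "(\<lambda>x. r x + s x) \<in> ?R" if "r \<in> ?R" "s \<in> ?R" for r s
    proof -
      have "of_real_on_circle (\<lambda>x. r x + s x) = (\<lambda>z. of_real_on_circle r z + of_real_on_circle s z)"
        by (auto simp: of_real_on_circle_def fun_eq_iff)
      moreover have "\<dots> \<in> descent_image" using that by (intro descent_image_add) simp_all
      ultimately show ?thesis by simp
    qed
    show "(\<lambda>x. r x * s x) \<in> ?R" if "r \<in> ?R" "s \<in> ?R" for r s
    proof -
      have "of_real_on_circle (\<lambda>x. r x * s x) = (\<lambda>z. of_real_on_circle r z * of_real_on_circle s z)"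
        by (auto simp: of_real_on_circle_def fun_eq_iff)
      moreover have "\<dots> \<in> descent_image" using that by (intro descent_image_mult) simp_all
      ultimately show ?thesis by simp
    qed
    show "(\<lambda>_. c) \<in> ?R" for c
    proof -
      have "of_real_on_circle (\<lambda>_. c) = (\<lambda>z. if z \<in> circle then complex_of_real c else 0)"
        by (simp add: of_real_on_circle_def)
      then show ?thesis using descent_image_const by (simp only: mem_Collect_eq)
    qed
    show "\<exists>r\<in>?R. r z \<noteq> r z'" if zz': "z \<in> circle" "z' \<in> circle" "z \<noteq> z'" for z z'
    proof -
      obtain h where h: "h \<in> fixed_alg \<theta> f" and ne: "fiber_descent m h z \<noteq> fiber_descent m h z'"
        using fiber_descent_separates[OF zz'] by blast
      then have "Re (fiber_descent m h z) \<noteq> Re (fiber_descent m h z') \<or>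
                 Im (fiber_descent m h z) \<noteq> Im (fiber_descent m h z')"
        by (simp add: complex_eq_iff)
      moreover have "(\<lambda>z. Re (fiber_descent m h z)) \<in> ?R" "(\<lambda>z. Im (fiber_descent m h z)) \<in> ?R"
        unfolding mem_Collect_eq by (rule descent_image_re_im[OF imageI[OF h]])+
      ultimately show ?thesis by (elim disjE) (rule bexI, assumption, assumption)+
    qed
  qed (rule compact_circle)
  obtain F where F: "F \<in> UNIV \<rightarrow> ?R" and lim: "uniform_limit circle F r sequentially"
    using function_ring_on.Stone_Weierstrass[OF \<open>function_ring_on ?R circle\<close> r] by blast
  have dist: "dist (of_real_on_circle g z) (of_real_on_circle r z) = dist (g z) (r z)"
    if "z \<in> circle" for g z
    using that by (simp add: of_real_on_circle_def dist_of_real)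
  have "of_real_on_circle (F n) \<in> descent_image" for n using F by blast
  moreover have "uniform_limit circle (\<lambda>n. of_real_on_circle (F n)) (of_real_on_circle r) sequentially"
    using lim unfolding uniform_limit_iff by (simp add: dist cong: ball_cong)
  ultimately show ?thesis by (rule descent_image_uniform_limit[OF _ _ of_real_on_circle_Cfun[OF r]])
qed

lemma Cfun_subset_descent_image: "Cfun circle \<subseteq> descent_image"
proof
  fix k assume "k \<in> Cfun circle"
  then have kc: "continuous_on circle k" and k0: "\<And>z. z \<notin> circle \<Longrightarrow> k z = 0"
    by (auto simp: Cfun_def)
  have "k = (\<lambda>z. of_real_on_circle (\<lambda>z. Re (k z)) z + \<i> * of_real_on_circle (\<lambda>z. Im (k z)) z)"
    by (auto simp: fun_eq_iff of_real_on_circle_def k0 complex_eq_iff)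
  also have "\<dots> \<in> descent_image"
  proof -
    have "continuous_on circle (\<lambda>z. Re (k z))" using kc by (intro continuous_intros)
    moreover have "continuous_on circle (\<lambda>z. Im (k z))" using kc by (intro continuous_intros)
    ultimately show ?thesis
      by (intro descent_image_add descent_image_scale of_real_on_circle_in_descent_image)
  qed
  finally show "k \<in> descent_image" .
qed

lemma star_iso_fiber_descent: "star_iso (fixed_alg \<theta> f) (Cfun circle) (fiber_descent m)"
  unfolding star_iso_def
proof (intro conjI ballI allI)
  show "bij_betw (fiber_descent m) (fixed_alg \<theta> f) (Cfun circle)"
    unfolding bij_betw_def
    using inj_on_fiber_descent fiber_descent_Cfun Cfun_subset_descent_image by blast
qed (rule fiber_descent_add fiber_descent_mult fiber_descent_scale fiber_descent_cnj)+

end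

theorem mainTheorem18:
  fixes \<theta> :: "'a::t2_space \<Rightarrow> 'a" and f :: "'a \<Rightarrow> complex"
  assumes "compact (UNIV :: 'a set)"
    and "\<exists>\<theta>'. homeomorphism UNIV UNIV \<theta> \<theta>'"
    and "top_ergodic \<theta>"
    and "continuous_on UNIV f" and "\<forall>x. f x \<in> circle"
  shows "(star_isomorphic_to_C (fixed_alg \<theta> f) \<or> star_isomorphic (fixed_alg \<theta> f) (Cfun circle))
         \<and> (star_isomorphic_to_C (fixed_alg \<theta> f) \<longleftrightarrow> skew_ergodic \<theta> f)"
proof -
  interpret ergodic_skew \<theta> f
    using assms(3,5) by unfold_locales auto
  let ?G = "rotation_stabilizer (fixed_alg \<theta> f)"
  have "?G = circle \<or> (\<exists>m>0. ?G = {c \<in> circle. c ^ m = 1})"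
    by (intro closed_circle_subgroup_cases closed_rotation_stabilizer fixed_algD(1)
        rotation_stabilizer_subset one_in_rotation_stabilizer rotation_stabilizer_mult
        rotation_stabilizer_cnj)
  then have "skew_ergodic \<theta> f \<or> star_isomorphic (fixed_alg \<theta> f) (Cfun circle)"
  proof (elim disjE exE conjE)
    assume "?G = circle"
    then show ?thesis using skew_ergodic_if_rotation_stabilizer_eq_circle by blast
  next
    fix m :: nat assume "m > 0" "?G = {c \<in> circle. c ^ m = 1}"
    then interpret ergodic_skew_periodic \<theta> f m by unfold_locales
    show ?thesis using star_iso_fiber_descent unfolding star_isomorphic_def by blast
  qed
  then show ?thesis
    using star_isomorphic_to_C_if_skew_ergodic[where f = f, OF f_circle]
      skew_ergodic_if_star_isomorphic_to_C[where f = f, OF f_circle] by blast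
qed

end
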